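(* Let $a,k,d,e,f$ be integers with $1\le a\le k$, $1\le d\le k$, $1\le f\le d$, and $e=d$ or $2e=d$. Then $${}_dC_{dk+e,\,da+f}(x;q)-{}_dC_{dk+e,\,da+f-1}(x;q)=\begin{cases}(xq)^{da+f-1}\,{}_dT_{dk+e,\,dk-da+d}(xq;q)&\text{if } f\le e,\\ (xq)^{da+f-1}\,{}_dT_{dk+e,\,dk-da}(xq;q)&\text{if } f>e.\end{cases}$$
   Context: Fix integers $d,k\ge1$ and $e$ with $e=d$ or $2e=d$. Notation: $(a;q)_n=\prod_{j=0}^{n-1}(1-aq^j)$, $(a;q)_\infty=\prod_{j\ge0}(1-aq^j)$. Write $X=xq$ and $\binom{n+1}{2}=n(n+1)/2$. For $n\ge0$ set $$P_n(x;q)=\frac{(-1)^n x^{(dk+e)n}q^{(2dk+2e+d)\binom{n+1}{2}}\,((xq)^d;q^{2d})_\infty}{(q^d;q^d)_n\,((xq^{n+1})^d;q^d)_\infty\,(xq;q^2)_\infty},\qquad t\alpha_n(x;q)=\frac{(-1)^n x^{(dk+e)n}q^{(2dk+2e+d)\binom{n+1}{2}}\,((xq^2)^d;q^{2d})_\infty}{(q^d;q^d)_n\,((xq^{n+1})^d;q^d)_\infty\,(xq^2;q^2)_\infty},$$ and $t\beta_n(x;q)=-t\alpha_n(x;q)$. For $f\in\{1,\dots,d\}$ define $c\alpha[f]_n(x;q)=P_n(x;q)\,q^{n(f-e)}\,U_f$ and $c\beta[f]_n(x;q)=-P_n(x;q)\,q^{n(e-f)}\,V_f$, where $U_f=\frac{1-X^{d+f-e}}{1-X^d}+q^{nd}\frac{X^{d+f-e}-X^d}{1-X^d}$,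 $V_f=\frac{X^{e-f}-X^d}{1-X^d}+q^{-nd}\frac{1-X^{e-f}}{1-X^d}$ if $f<e$; $U_f=V_f=1$ if $f=e$; $U_f=\frac{X^{f-e}-X^d}{1-X^d}+q^{-nd}\frac{1-X^{f-e}}{1-X^d}$, $V_f=\frac{1-X^{d-f+e}}{1-X^d}+q^{nd}\frac{X^{d-f+e}-X^d}{1-X^d}$ if $f>e$. For an integer $N\ge0$ let $\bar N\in\{1,\dots,d\}$ be the residue with $\bar N\equiv N\pmod d$ and define $${}_dC_{dk+e,N}(x;q)=\sum_{n\ge0}\Big(c\alpha[\bar N]_n(x;q)\,q^{-nN}+c\beta[\bar N]_n(x;q)\,(xq^{n+1})^N\Big),\qquad {}_dT_{dk+e,N}(x;q)=\sum_{n\ge0}\Big(t\alpha_n(x;q)\,q^{-nN}+t\beta_n(x;q)\,(xq^{n+1})^N\Big).$$ Identities are as formal power series in $x$ and $q$ (equivalently analytic functions for $|q|<1$, $|x|\le1$). *)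

theory Defs
  imports "HOL-Analysis.Analysis"
begin

definition qpoch :: "complex \<Rightarrow> complex \<Rightarrow> nat \<Rightarrow> complex" where
  "qpoch a q n = (\<Prod>j<n. (1 - a * q ^ j))"

definition qpochinf :: "complex \<Rightarrow> complex \<Rightarrow> complex" where
  "qpochinf a q = prodinf (\<lambda>j. 1 - a * q ^ j)"

definition pref :: "nat \<Rightarrow> nat \<Rightarrow> nat \<Rightarrow> complex \<Rightarrow> complex \<Rightarrow> nat \<Rightarrow> complex" where
  "pref d k e x q n = (-1) ^ n * x ^ ((d*k+e)*n) * q ^ ((2*d*k+2*e+d) * (n*(n+1) div 2))"

definition Pn :: "nat \<Rightarrow> nat \<Rightarrow> nat \<Rightarrow> complex \<Rightarrow> complex \<Rightarrow> nat \<Rightarrow> complex" where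
  "Pn d k e x q n = pref d k e x q n * qpochinf ((x*q)^d) (q^(2*d))
     / (qpoch (q^d) (q^d) n * qpochinf ((x*q^(n+1))^d) (q^d) * qpochinf (x*q) (q^2))"

definition talpha :: "nat \<Rightarrow> nat \<Rightarrow> nat \<Rightarrow> complex \<Rightarrow> complex \<Rightarrow> nat \<Rightarrow> complex" where
  "talpha d k e x q n = pref d k e x q n * qpochinf ((x*q^2)^d) (q^(2*d))
     / (qpoch (q^d) (q^d) n * qpochinf ((x*q^(n+1))^d) (q^d) * qpochinf (x*q^2) (q^2))"

definition tbeta :: "nat \<Rightarrow> nat \<Rightarrow> nat \<Rightarrow> complex \<Rightarrow> complex \<Rightarrow> nat \<Rightarrow> complex" where
  "tbeta d k e x q n = - talpha d k e x q n"

definition Uf :: "nat \<Rightarrow> nat \<Rightarrow> nat \<Rightarrow> complex \<Rightarrow> complex \<Rightarrow> nat \<Rightarrow> complex" where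
  "Uf d e f x q n = (let X = x*q in
     if f < e then (1 - X^(d+f-e)) / (1 - X^d) + q^(n*d) * (X^(d+f-e) - X^d) / (1 - X^d)
     else if f = e then 1
     else (X^(f-e) - X^d) / (1 - X^d) + inverse (q^(n*d)) * (1 - X^(f-e)) / (1 - X^d))"

definition Vf :: "nat \<Rightarrow> nat \<Rightarrow> nat \<Rightarrow> complex \<Rightarrow> complex \<Rightarrow> nat \<Rightarrow> complex" where
  "Vf d e f x q n = (let X = x*q in
     if f < e then (X^(e-f) - X^d) / (1 - X^d) + inverse (q^(n*d)) * (1 - X^(e-f)) / (1 - X^d)
     else if f = e then 1
     else (1 - X^(d-f+e)) / (1 - X^d) + q^(n*d) * (X^(d-f+e) - X^d) / (1 - X^d))"

definition calpha :: "nat \<Rightarrow> nat \<Rightarrow> nat \<Rightarrow> nat \<Rightarrow> complex \<Rightarrow> complex \<Rightarrow> nat \<Rightarrow> complex" where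
  "calpha d k e f x q n = Pn d k e x q n * q powi (int n * (int f - int e)) * Uf d e f x q n"

definition cbeta :: "nat \<Rightarrow> nat \<Rightarrow> nat \<Rightarrow> nat \<Rightarrow> complex \<Rightarrow> complex \<Rightarrow> nat \<Rightarrow> complex" where
  "cbeta d k e f x q n = - Pn d k e x q n * q powi (int n * (int e - int f)) * Vf d e f x q n"

definition resid :: "nat \<Rightarrow> nat \<Rightarrow> nat" where
  "resid d N = (if N mod d = 0 then d else N mod d)"

definition Cfun :: "nat \<Rightarrow> nat \<Rightarrow> nat \<Rightarrow> nat \<Rightarrow> complex \<Rightarrow> complex \<Rightarrow> complex" where
  "Cfun d k e N x q = (\<Sum>n. calpha d k e (resid d N) x q n * inverse (q ^ (n*N))
       + cbeta d k e (resid d N) x q n * (x * q^(n+1)) ^ N)"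

definition Tfun :: "nat \<Rightarrow> nat \<Rightarrow> nat \<Rightarrow> nat \<Rightarrow> complex \<Rightarrow> complex \<Rightarrow> complex" where
  "Tfun d k e N x q = (\<Sum>n. talpha d k e x q n * inverse (q ^ (n*N))
       + tbeta d k e x q n * (x * q^(n+1)) ^ N)"

end

theory Submission
  imports Defs
begin

text \<open>
With \<open>X = xq\<close> and \<open>T = q^(nd)\<close> put \<open>phi_m = 1 - X^m + T X^m - T X^d\<close> and
\<open>W_n(m) = q^(nm) phi_m / (T (1 - X^d))\<close>. Both \<open>q^(n(f-e)) U_f\<close> and \<open>q^(n(e-f)) V_f\<close> are values
\<open>W_n(m)\<close> at an index \<open>m \<in> {0..d}\<close> congruent to \<open>f - e\<close>, resp. \<open>e - f\<close>, modulo \<open>d\<close>; as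
\<open>W_n(0) = W_n(d) = 1\<close>, passing from \<open>N\<close> to \<open>N - 1\<close> shifts this index by one even where the
residue of \<open>N\<close> wraps around. The recurrences \<open>phi_(m+1) = X phi_m + (1 - X)(1 - T X^d)\<close> and
\<open>phi_(m+1) = phi_m + X^m (1 - X)(1 - T)\<close> cancel the factors \<open>1 - (xq^(n+1))^d\<close> and
\<open>1 - q^((n+1)d)\<close> in the denominators of \<open>P_n\<close> and \<open>P_(n+1)\<close>: the difference of the
\<open>c\<beta>\<close>-terms at \<open>n\<close> is \<open>(xq)^(N-1)\<close> times the \<open>t\<alpha>\<close>-term at \<open>n\<close>, the difference of the
\<open>c\<alpha>\<close>-terms at \<open>n + 1\<close> is \<open>(xq)^(N-1)\<close> times the \<open>t\<beta>\<close>-term at \<open>n\<close>, and the \<open>c\<alpha>\<close>-terms at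
\<open>n = 0\<close> agree. Since \<open>|P_(n+1) / P_n| = O(|q|^n)\<close>, all series converge absolutely and may be
regrouped accordingly.
\<close>

lemma summable_of_ratio_bound:
  fixes h :: "nat \<Rightarrow> real"
  assumes "\<And>n. 0 \<le> h n" "\<And>n. h (Suc n) \<le> M * r^n * h n" "0 \<le> r" "r < 1"
  shows "summable h"
proof -
  have "(\<lambda>n. M * r^n) \<longlonglongrightarrow> M * 0"
    by (intro tendsto_mult tendsto_const LIMSEQ_power_zero) (use assms(3,4) in auto)
  then have "eventually (\<lambda>n. M * r^n < 1/2) sequentially" by (intro order_tendstoD) auto
  then obtain N where N: "\<And>n. n \<ge> N \<Longrightarrow> M * r^n < 1/2" by (auto simp: eventually_sequentially)
  show ?thesis
  proof (rule summable_ratio_test[of "1/2" N])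
    fix n assume "N \<le> n"
    then have "M * r^n * h n \<le> 1/2 * h n" using N[of n] assms(1)[of n] by (intro mult_right_mono) auto
    then show "norm (h (Suc n)) \<le> 1/2 * norm (h n)" using assms(1,2)[of n] assms(1)[of "Suc n"] by simp
  qed simp
qed

lemma suminf_diff_eq_shifted:
  fixes aF aG bF bG t u :: "nat \<Rightarrow> 'a::{real_normed_field,banach}"
  assumes "summable aF" "summable aG" "summable bF" "summable bG" "aF 0 = aG 0"
    and "\<And>n. bF n - bG n = z * t n" "\<And>n. aF (Suc n) - aG (Suc n) = z * u n"
  shows "(\<Sum>n. aF n + bF n) - (\<Sum>n. aG n + bG n) = z * (\<Sum>n. t n + u n)"
proof -
  have sa: "summable (\<lambda>n. aF n - aG n)" and sb: "summable (\<lambda>n. bF n - bG n)"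
    using assms(1-4) by (auto intro: summable_diff)
  then have sa': "summable (\<lambda>n. z * u n)"
    unfolding assms(7)[symmetric] by (subst summable_Suc_iff)
  have sb': "summable (\<lambda>n. z * t n)" using sb unfolding assms(6) .
  have "(\<Sum>n. aF n + bF n) - (\<Sum>n. aG n + bG n) = (\<Sum>n. aF n - aG n) + (\<Sum>n. bF n - bG n)"
    using assms(1-4) by (simp add: suminf_add[symmetric] suminf_diff[symmetric] summable_add algebra_simps)
  also have "(\<Sum>n. aF n - aG n) = (\<Sum>n. z * u n)"
    using suminf_split_head[OF sa] assms(5,7) by simp
  also have "(\<Sum>n. z * u n) + (\<Sum>n. bF n - bG n) = (\<Sum>n. z * (t n + u n))"
    unfolding assms(6) using sa' sb' by (simp add: suminf_add[symmetric] distrib_left add.commute)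
  also have "\<dots> = z * (\<Sum>n. t n + u n)"
  proof (cases "z = 0")
    case False
    then have "summable (\<lambda>n. t n + u n)"
      using summable_add[OF sb' sa'] by (simp add: distrib_left[symmetric] summable_cmult_iff)
    then show ?thesis by (rule suminf_mult)
  qed simp
  finally show ?thesis .
qed

lemma power_int_nat_mult_diff:
  fixes q :: "'a::field"
  shows "q powi (int n * (int a - int b)) = (if b \<le> a then (q^n)^(a-b) else inverse ((q^n)^(b-a)))"
proof (cases "b \<le> a")
  case True
  then have "int a - int b = int (a - b)" by simp
  then show ?thesis using True by (simp only: power_int_power[symmetric] power_int_of_nat if_True)
next
  case False
  then have "int a - int b = - int (b - a)" by simp
  then show ?thesis using False
    by (simp only: power_int_power[symmetric] power_int_minus power_int_of_nat if_False)
qed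

lemma qpochinf_unfold:
  assumes "norm q < 1"
  shows "qpochinf a q = (1 - a) * qpochinf (a*q) q"
proof -
  have "summable (\<lambda>j. norm ((1 - a*q^j) - 1))"
    using assms by (simp add: norm_mult norm_power summable_geometric)
  then have "convergent_prod (\<lambda>j. 1 - a*q^j)"
    by (intro abs_convergent_prod_imp_convergent_prod summable_imp_abs_convergent_prod)
  then have "(\<lambda>j. 1 - a*q^j) has_prod ((\<Prod>j<1. 1 - a*q^j) * (\<Prod>j. 1 - a*q^(j+1)))"
    by (rule has_prod_ignore_initial_segment')
  then have "qpochinf a q = (1 - a) * (\<Prod>j. 1 - a*q^(j+1))"
    unfolding qpochinf_def by (simp add: has_prod_unique[symmetric])
  also have "(\<lambda>j. 1 - a*q^(j+1)) = (\<lambda>j. 1 - (a*q)*q^j)"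
    by (auto simp: algebra_simps)
  finally show ?thesis by (simp add: qpochinf_def)
qed

lemma norm_mult_power_less_one:
  fixes x q :: complex
  assumes "norm q < 1" "norm x \<le> 1" "0 < m"
  shows "norm (x * q^m) < 1"
proof -
  have "norm (q^m) < 1" using assms(1,3) by (simp add: norm_power power_less_one_iff)
  then show ?thesis using assms(2)
    by (simp add: norm_mult) (meson mult_le_one norm_ge_zero le_less_trans less_imp_le mult_left_le_one_le not_le)
qed

lemma Pn_nonzero_factors:
  fixes x q :: complex
  assumes "norm q < 1" "norm x \<le> 1" "1 \<le> d"
  shows "1 - (x*q)^d \<noteq> 0" "1 - x*q \<noteq> 0" "1 - (x*q)^d * q^(n*d) \<noteq> 0" "1 - q^(Suc n*d) \<noteq> 0"
proof -
  have X: "norm (x*q) < 1" using norm_mult_power_less_one[OF assms(1,2), of 1] by simp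
  then show "1 - x*q \<noteq> 0" by auto
  have "norm ((x*q)^d) < 1" using X assms(3) by (simp add: norm_power power_less_one_iff)
  then show "1 - (x*q)^d \<noteq> 0" by auto
  have "norm (q^(n*d)) \<le> 1" using assms(1) by (simp add: norm_power power_le_one)
  then have "norm ((x*q)^d * q^(n*d)) < 1"
    using \<open>norm ((x*q)^d) < 1\<close> by (simp add: norm_mult mult_le_one) (meson le_less_trans mult_left_le norm_ge_zero)
  then show "1 - (x*q)^d * q^(n*d) \<noteq> 0" by auto
  have "norm (q^(Suc n*d)) < 1" using assms(1,3) by (simp add: norm_power power_less_one_iff)
  then show "1 - q^(Suc n*d) \<noteq> 0" by auto
qed

lemma pref_Suc:
  "pref d k e x q (Suc n) = pref d k e x q n * (- (x^(d*k+e) * q^((2*d*k+2*e+d)*(n+1))))"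
proof -
  have "Suc n * (Suc n + 1) = n*(n+1) + 2*(n+1)" by (simp add: algebra_simps)
  then have tri: "Suc n * (Suc n + 1) div 2 = n*(n+1) div 2 + (n+1)" by simp
  show ?thesis unfolding pref_def tri
    by (simp only: distrib_left power_add mult_Suc_right power_Suc) (simp add: algebra_simps)
qed

lemma pref_ratio_split:
  fixes x q :: complex
  shows "x^(d*k+e) * q^((2*d*k+2*e+d)*(n+1)) = (x*q)^(d*k+e) * (q^n)^(d*k+e) * (q^Suc n)^(d*k+e+d)"
proof -
  have "q^((2*d*k+2*e+d)*(n+1)) = (q^Suc n)^(d*k+e) * (q^Suc n)^(d*k+e+d)"
    unfolding power_add[symmetric] power_mult[symmetric]
    by (rule arg_cong[where f = "\<lambda>j. q^j"]) (simp add: algebra_simps)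
  moreover have "x^(d*k+e) * (q^Suc n)^(d*k+e) = (x*q)^(d*k+e) * (q^n)^(d*k+e)"
    by (simp add: power_mult_distrib[symmetric] mult_ac)
  ultimately show ?thesis by (simp add: mult_ac)
qed

lemma pref_mult_q: "pref d k e (x*q) q n = pref d k e x q n * (q^n)^(d*k+e)"
  unfolding pref_def by (simp add: power_mult_distrib power_mult[symmetric] algebra_simps)

definition Pn_tail :: "nat \<Rightarrow> complex \<Rightarrow> complex \<Rightarrow> nat \<Rightarrow> complex" where
  "Pn_tail d x q n = qpochinf ((x*q^3)^d) (q^(2*d)) /
     (qpoch (q^d) (q^d) n * qpochinf ((x*q^(n+2))^d) (q^d) * qpochinf (x*q^3) (q^2))"

lemma Pn_factor:
  fixes x q :: complex
  assumes "norm q < 1" "1 \<le> d"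
  shows "Pn d k e x q n = pref d k e x q n * ((1 - (x*q)^d) / ((1 - (x*q)^d * q^(n*d)) * (1 - x*q)))
    * Pn_tail d x q n"
proof -
  have "norm (q^(2*d)) < 1" "norm (q^d) < 1" "norm (q^2) < 1"
    using assms by (simp_all add: norm_power power_less_one_iff)
  note unfold = this[THEN qpochinf_unfold]
  have "qpochinf ((x*q)^d) (q^(2*d)) = (1 - (x*q)^d) * qpochinf ((x*q^3)^d) (q^(2*d))"
    using unfold(1)[of "(x*q)^d"]
    by (simp add: power_mult_distrib power_mult[symmetric] power_add[symmetric] mult.assoc)
  moreover have "qpochinf (x*q) (q^2) = (1 - x*q) * qpochinf (x*q^3) (q^2)"
    using unfold(3)[of "x*q"] by (simp add: mult.assoc power2_eq_square power3_eq_cube)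
  moreover have "(x*q^(n+1))^d * q^d = (x*q^(n+2))^d"
    by (simp add: power_mult_distrib mult_ac)
  then have "qpochinf ((x*q^(n+1))^d) (q^d) = (1 - (x*q^(n+1))^d) * qpochinf ((x*q^(n+2))^d) (q^d)"
    using unfold(2)[of "(x*q^(n+1))^d"] by simp
  moreover have "(x*q^(n+1))^d = (x*q)^d * q^(n*d)"
    by (simp add: power_mult_distrib power_mult[symmetric] mult_ac)
  ultimately show ?thesis unfolding Pn_def Pn_tail_def
    by (simp add: divide_inverse mult_ac)
qed

lemma talpha_mult_q:
  "talpha d k e (x*q) q n = pref d k e x q n * (q^n)^(d*k+e) * Pn_tail d x q n"
proof -
  have shift: "x*q*q^2 = x*q^3" "x*q*q^(n+1) = x*q^(n+2)"
    by (simp_all add: mult.assoc power2_eq_square power3_eq_cube)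
  show ?thesis unfolding talpha_def Pn_tail_def pref_mult_q shift by (simp add: divide_inverse mult_ac)
qed

lemma Pn_tail_Suc:
  fixes x q :: complex
  assumes "norm q < 1" "norm x \<le> 1" "1 \<le> d"
  shows "Pn_tail d x q (Suc n) = Pn_tail d x q n * (1 - (x*q)^d * q^(Suc n*d)) / (1 - q^(Suc n*d))"
proof -
  have "norm (q^d) < 1" using assms(1,3) by (simp add: norm_power power_less_one_iff)
  note unfold = qpochinf_unfold[OF this, of "(x*q^(n+2))^d"]
  have "(x*q^(n+2))^d * q^d = (x*q^(Suc n+2))^d"
    by (simp add: power_mult_distrib mult_ac)
  then have I: "qpochinf ((x*q^(n+2))^d) (q^d)
      = (1 - (x*q^(n+2))^d) * qpochinf ((x*q^(Suc n+2))^d) (q^d)"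
    using unfold by simp
  have "x*q^(n+2) = (x*q) * q^(Suc n)" by (simp add: mult_ac)
  then have "(x*q^(n+2))^d = (x*q)^d * q^(Suc n*d)" by (simp only: power_mult_distrib power_mult)
  moreover note Pn_nonzero_factors(3)[OF assms, of "Suc n"]
  moreover have "qpoch (q^d) (q^d) (Suc n) = qpoch (q^d) (q^d) n * (1 - q^(Suc n*d))"
    unfolding qpoch_def by (simp add: power_mult[symmetric] power_add[symmetric] algebra_simps)
  ultimately show ?thesis unfolding Pn_tail_def I
    by (simp add: divide_inverse inverse_mult_distrib mult_ac)
qed

lemma Pn_Suc_factor:
  fixes x q :: complex
  assumes "norm q < 1" "norm x \<le> 1" "1 \<le> d"
  shows "Pn d k e x q (Suc n) = pref d k e x q n * (- (x^(d*k+e) * q^((2*d*k+2*e+d)*(n+1))))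
    * ((1 - (x*q)^d) / ((1 - q^(Suc n*d)) * (1 - x*q))) * Pn_tail d x q n"
proof -
  have "\<And>a c b t s. a * (c / ((1 - (x*q)^d * q^(Suc n*d)) * b)) * (t * (1 - (x*q)^d * q^(Suc n*d)) / s)
      = a * (c / (s * b)) * t"
    using Pn_nonzero_factors(3)[OF assms, of "Suc n"] by (simp add: divide_inverse inverse_mult_distrib mult_ac)
  then show ?thesis unfolding Pn_factor[OF assms(1,3)] Pn_tail_Suc[OF assms] pref_Suc .
qed

lemma Pn_Suc:
  fixes x q :: complex
  assumes "norm q < 1" "norm x \<le> 1" "1 \<le> d"
  shows "Pn d k e x q (Suc n) = Pn d k e x q n *
    (- (x^(d*k+e) * q^((2*d*k+2*e+d)*(n+1))) * (1 - (x*q)^d * q^(n*d)) / (1 - q^(Suc n*d)))"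
proof -
  have "\<And>a r c b t s. a * r * (c / (s * b)) * t
      = a * (c / ((1 - (x*q)^d * q^(n*d)) * b)) * t * (r * (1 - (x*q)^d * q^(n*d)) / s)"
    using Pn_nonzero_factors(3)[OF assms, of n] by (simp add: divide_inverse inverse_mult_distrib mult_ac)
  then show ?thesis unfolding Pn_Suc_factor[OF assms] Pn_factor[OF assms(1,3), where n = n] .
qed

lemma norm_Pn_Suc_le:
  fixes x q :: complex
  assumes q: "norm q < 1" and x: "norm x \<le> 1" and d: "1 \<le> d"
  shows "norm (Pn d k e x q (Suc n)) \<le> norm (Pn d k e x q n) * (2 / (1 - norm q) * norm q ^ n)"
proof -
  let ?r = "norm q"
  have "norm (x^(d*k+e)) \<le> 1" using x by (simp add: norm_power power_le_one)
  moreover have "norm (q^((2*d*k+2*e+d)*(n+1))) \<le> ?r ^ n"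
  proof -
    have "n \<le> (2*d*k+2*e+d)*(n+1)" using d by (simp add: trans_le_add2)
    then show ?thesis using q by (simp add: norm_power power_decreasing)
  qed
  moreover have "norm (1 - (x*q)^d * q^(n*d)) \<le> 2"
  proof -
    have "norm ((x*q)^d * q^(n*d)) \<le> 1"
      using q x by (simp add: norm_mult norm_power power_le_one mult_le_one)
    then show ?thesis using norm_triangle_ineq4[of 1 "(x*q)^d * q^(n*d)"] by simp
  qed
  moreover have "1 - ?r \<le> norm (1 - q^(Suc n*d))"
  proof -
    have "?r ^ (Suc n*d) \<le> ?r ^ 1" using q d by (intro power_decreasing) auto
    then show ?thesis using norm_triangle_ineq2[of 1 "q^(Suc n*d)"] by (simp add: norm_power)
  qed
  moreover have "0 < 1 - ?r" using q by simp
  ultimately have "norm (- (x^(d*k+e) * q^((2*d*k+2*e+d)*(n+1))) * (1 - (x*q)^d * q^(n*d)) / (1 - q^(Suc n*d)))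
      \<le> 1 * ?r ^ n * 2 / (1 - ?r)"
    unfolding norm_divide norm_mult norm_minus_cancel by (intro frac_le mult_mono) auto
  then show ?thesis unfolding Pn_Suc[OF assms] norm_mult
    by (intro mult_left_mono) (auto simp: mult.commute)
qed

lemma summable_norm_Pn_div_power:
  fixes x q :: complex
  assumes "q \<noteq> 0" "norm q < 1" "norm x \<le> 1" "1 \<le> d"
  shows "summable (\<lambda>n. norm (Pn d k e x q n) / norm q ^ (n*L))"
proof (rule summable_of_ratio_bound[where M = "2 / (1 - norm q) / norm q ^ L" and r = "norm q"])
  fix n
  have "norm (Pn d k e x q (Suc n)) / norm q ^ (Suc n * L)
      \<le> norm (Pn d k e x q n) * (2 / (1 - norm q) * norm q ^ n) / norm q ^ (Suc n * L)"
    using assms(1) by (intro divide_right_mono norm_Pn_Suc_le assms(2-4)) simp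
  also have "\<dots> = 2 / (1 - norm q) / norm q ^ L * norm q ^ n * (norm (Pn d k e x q n) / norm q ^ (n*L))"
    by (simp add: power_add mult_ac)
  finally show "norm (Pn d k e x q (Suc n)) / norm q ^ (Suc n * L)
      \<le> 2 / (1 - norm q) / norm q ^ L * norm q ^ n * (norm (Pn d k e x q n) / norm q ^ (n*L))" .
qed (use assms(2) in auto)

definition phi :: "nat \<Rightarrow> complex \<Rightarrow> complex \<Rightarrow> nat \<Rightarrow> complex" where
  "phi d X T m = 1 - X^m + T*X^m - T*X^d"

definition weight :: "nat \<Rightarrow> complex \<Rightarrow> complex \<Rightarrow> nat \<Rightarrow> nat \<Rightarrow> complex" where
  "weight d x q n m = (q^n)^m * phi d (x*q) (q^(n*d)) m / (q^(n*d) * (1 - (x*q)^d))"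

lemma phi_Suc: "phi d X T (Suc m) = X * phi d X T m + (1 - X) * (1 - X^d * T)"
  by (simp add: phi_def algebra_simps)

lemma phi_Suc_diff: "phi d X T (Suc m) = phi d X T m + X^m * (1 - X) * (1 - T)"
  by (simp add: phi_def algebra_simps)

lemma phi_div: "T \<noteq> 0 \<Longrightarrow> phi d X T m / T = X^m - X^d + inverse T * (1 - X^m)"
  by (simp add: phi_def field_simps)

lemma weight_0_left:
  assumes "(x*q)^d \<noteq> 1"
  shows "weight d x q 0 m = 1"
  using assms by (simp add: weight_def phi_def)

lemma weight_0_right:
  assumes "q \<noteq> 0" "(x*q)^d \<noteq> 1"
  shows "weight d x q n 0 = 1"
  using assms by (simp add: weight_def phi_def right_diff_distrib)

lemma weight_self:
  assumes "q \<noteq> 0" "(x*q)^d \<noteq> 1"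
  shows "weight d x q n d = 1"
  using assms by (simp add: weight_def phi_def power_mult)

lemma weight_step:
  "weight d x q n (Suc m) - (x*q) * q^n * weight d x q n m
    = (q^n)^(Suc m) * (1 - x*q) * (1 - (x*q)^d * q^(n*d)) / (q^(n*d) * (1 - (x*q)^d))"
  unfolding weight_def phi_Suc by (simp add: algebra_simps add_divide_distrib diff_divide_distrib)

lemma weight_diff:
  "weight d x q n (Suc m) - q^n * weight d x q n m
    = (q^n)^(Suc m) * (x*q)^m * (1 - x*q) * (1 - q^(n*d)) / (q^(n*d) * (1 - (x*q)^d))"
  unfolding weight_def phi_Suc_diff by (simp add: algebra_simps add_divide_distrib diff_divide_distrib)

lemma weight_eq_unshifted:
  fixes q :: complex
  assumes "q \<noteq> 0"
  shows "weight d x q n m = (q^n)^m *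
    (((x*q)^m - (x*q)^d) / (1 - (x*q)^d) + inverse (q^(n*d)) * (1 - (x*q)^m) / (1 - (x*q)^d))"
proof -
  have "weight d x q n m = (q^n)^m * (phi d (x*q) (q^(n*d)) m / q^(n*d)) / (1 - (x*q)^d)"
    unfolding weight_def by simp
  also have "\<dots> = (q^n)^m * ((x*q)^m - (x*q)^d + inverse (q^(n*d)) * (1 - (x*q)^m)) / (1 - (x*q)^d)"
    using assms by (simp add: phi_div)
  also have "\<dots> = (q^n)^m * (((x*q)^m - (x*q)^d) / (1 - (x*q)^d)
      + inverse (q^(n*d)) * (1 - (x*q)^m) / (1 - (x*q)^d))"
    by (metis add_divide_distrib times_divide_eq_right)
  finally show ?thesis .
qed

lemma weight_eq_shifted:
  fixes q :: complex
  assumes "q \<noteq> 0" "m + j = d"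
  shows "weight d x q n m = inverse ((q^n)^j) *
    ((1 - (x*q)^m) / (1 - (x*q)^d) + q^(n*d) * ((x*q)^m - (x*q)^d) / (1 - (x*q)^d))"
proof -
  have T: "q^(n*d) = (q^n)^m * (q^n)^j"
    unfolding power_mult power_add[symmetric] assms(2) ..
  have "weight d x q n m = (q^n)^m * phi d (x*q) (q^(n*d)) m / ((q^n)^m * (q^n)^j * (1 - (x*q)^d))"
    unfolding weight_def T[symmetric] ..
  also have "\<dots> = inverse ((q^n)^j) * (phi d (x*q) (q^(n*d)) m / (1 - (x*q)^d))"
    using assms(1) by (simp add: divide_inverse)
  finally show ?thesis by (simp add: phi_def add_divide_distrib diff_divide_distrib algebra_simps)
qed

lemma calpha_eq_weight:
  fixes q :: complex
  assumes "q \<noteq> 0" "(x*q)^d \<noteq> 1" "m \<le> d" "m + e = g \<or> m + e = g + d"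
  shows "calpha d k e g x q n = Pn d k e x q n * weight d x q n m"
proof -
  have "q powi (int n * (int g - int e)) * Uf d e g x q n = weight d x q n m"
  proof (cases g e rule: linorder_cases)
    case less
    then have "m = d + g - e" "m + (e - g) = d" using assms(4) by arith+
    then show ?thesis using less weight_eq_shifted[OF assms(1), of m "e - g" d x n]
      by (simp add: Uf_def Let_def power_int_nat_mult_diff)
  next
    case equal
    then have "m = 0 \<or> m = d" using assms(4) by arith
    then show ?thesis using equal assms(1,2) by (auto simp: Uf_def weight_0_right weight_self)
  next
    case greater
    then have "m = g - e" using assms(3,4) by arith
    then show ?thesis using greater weight_eq_unshifted[OF assms(1), of d x n m]
      by (simp add: Uf_def Let_def power_int_nat_mult_diff)
  qed
  then show ?thesis by (simp add: calpha_def mult.assoc)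
qed

lemma cbeta_eq_weight:
  fixes q :: complex
  assumes "q \<noteq> 0" "(x*q)^d \<noteq> 1" "g \<le> d" "m \<le> d" "m + g = e \<or> m + g = e + d"
  shows "cbeta d k e g x q n = - Pn d k e x q n * weight d x q n m"
proof -
  have "q powi (int n * (int e - int g)) * Vf d e g x q n = weight d x q n m"
  proof (cases g e rule: linorder_cases)
    case less
    then have "m = e - g" using assms(4,5) by arith
    then show ?thesis using less weight_eq_unshifted[OF assms(1), of d x n m]
      by (simp add: Vf_def Let_def power_int_nat_mult_diff)
  next
    case equal
    then have "m = 0 \<or> m = d" using assms(5) by arith
    then show ?thesis using equal assms(1,2) by (auto simp: Vf_def weight_0_right weight_self)
  next
    case greater
    then have "m = d - g + e" "m + (g - e) = d" using assms(3,5) by arith+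
    then show ?thesis using greater weight_eq_shifted[OF assms(1), of m "g - e" d x n]
      by (simp add: Vf_def Let_def power_int_nat_mult_diff)
  qed
  then show ?thesis by (simp add: cbeta_def mult.assoc)
qed

lemma norm_weight_le:
  fixes x q :: complex
  assumes "q \<noteq> 0" "norm q < 1" "norm x \<le> 1"
  shows "norm (weight d x q n m) \<le> 4 / norm (1 - (x*q)^d) / norm q ^ (n*d)"
proof -
  have "norm (x*q) \<le> 1" "norm q \<le> 1" using assms(2,3) by (auto simp: norm_mult mult_le_one)
  then have le1: "norm ((q^n)^m) \<le> 1" "norm (q^(n*d)) \<le> 1" "norm ((x*q)^m) \<le> 1" "norm ((x*q)^d) \<le> 1"
    by (simp_all add: norm_power power_le_one)
  let ?T = "q^(n*d)"
  have "norm (phi d (x*q) ?T m) \<le> norm (1 - (x*q)^m + ?T*(x*q)^m) + norm (?T*(x*q)^d)"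
    unfolding phi_def by (rule norm_triangle_ineq4)
  also have "\<dots> \<le> norm (1 - (x*q)^m) + norm (?T*(x*q)^m) + norm (?T*(x*q)^d)"
    by (intro add_right_mono norm_triangle_ineq)
  also have "\<dots> \<le> (1 + norm ((x*q)^m)) + norm ?T * norm ((x*q)^m) + norm ?T * norm ((x*q)^d)"
    unfolding norm_mult by (intro add_right_mono) (metis norm_one norm_triangle_ineq4)
  also have "\<dots> \<le> 1 + 1 + 1 * 1 + 1 * 1"
    using le1 by (intro add_mono mult_mono) auto
  finally have "norm (phi d (x*q) ?T m) \<le> 4" by simp
  then have "norm ((q^n)^m * phi d (x*q) ?T m) \<le> 1 * 4"
    unfolding norm_mult using le1(1) by (intro mult_mono) auto
  then have "norm (weight d x q n m) \<le> 4 / (norm ?T * norm (1 - (x*q)^d))"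
    unfolding weight_def norm_divide norm_mult[of ?T] by (simp add: divide_right_mono)
  then show ?thesis by (simp add: norm_power power_mult mult.commute divide_divide_eq_left)
qed

lemma summable_Pn_weight_div_power:
  fixes x q :: complex
  assumes "q \<noteq> 0" "norm q < 1" "norm x \<le> 1" "1 \<le> d"
  shows "summable (\<lambda>n. Pn d k e x q n * weight d x q n m * inverse (q^(n*N)))"
proof (rule summable_comparison_test')
  let ?C = "4 / norm (1 - (x*q)^d)"
  show "summable (\<lambda>n. ?C * (norm (Pn d k e x q n) / norm q ^ (n*(d+N))))"
    by (intro summable_mult summable_norm_Pn_div_power assms)
  fix n
  have "norm (Pn d k e x q n * weight d x q n m * inverse (q^(n*N)))
      \<le> norm (Pn d k e x q n) * (?C / norm q ^ (n*d)) * inverse (norm q ^ (n*N))"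
    unfolding norm_mult norm_inverse norm_power
    by (intro mult_right_mono mult_left_mono norm_weight_le assms(1-3)) auto
  also have "\<dots> = ?C * (norm (Pn d k e x q n) / norm q ^ (n*(d+N)))"
    by (simp add: add_mult_distrib2 power_add divide_inverse inverse_mult_distrib mult_ac)
  finally show "norm (Pn d k e x q n * weight d x q n m * inverse (q^(n*N)))
      \<le> ?C * (norm (Pn d k e x q n) / norm q ^ (n*(d+N)))" .
qed

lemma summable_Pn_weight_times_power:
  fixes x q :: complex
  assumes "q \<noteq> 0" "norm q < 1" "norm x \<le> 1" "1 \<le> d"
  shows "summable (\<lambda>n. - Pn d k e x q n * weight d x q n m * (x*q^(n+1))^N)"
proof (rule summable_comparison_test')
  let ?C = "4 / norm (1 - (x*q)^d)"
  show "summable (\<lambda>n. ?C * (norm (Pn d k e x q n) / norm q ^ (n*d)))"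
    by (intro summable_mult summable_norm_Pn_div_power assms)
  fix n
  have "norm ((x*q^(n+1))^N) \<le> 1"
    using norm_mult_power_less_one[OF assms(2,3), of "n+1"] by (simp add: norm_power power_le_one)
  then have "norm (- Pn d k e x q n * weight d x q n m * (x*q^(n+1))^N)
      \<le> norm (Pn d k e x q n) * (?C / norm q ^ (n*d)) * 1"
    unfolding norm_mult norm_minus_cancel
    by (intro mult_mono mult_left_mono norm_weight_le assms(1-3)) auto
  then show "norm (- Pn d k e x q n * weight d x q n m * (x*q^(n+1))^N)
      \<le> ?C * (norm (Pn d k e x q n) / norm q ^ (n*d))" by (simp add: ac_simps)
qed

lemma resid_mult_add:
  assumes "1 \<le> f" "f \<le> d"
  shows "resid d (d*a + f) = f"
  using assms by (cases "f = d") (simp_all add: resid_def)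

lemma resid_mult_add_pred:
  assumes "1 \<le> a" "1 \<le> f" "f \<le> d"
  shows "resid d (d*a + f - 1) = (if f = 1 then d else f - 1)"
proof (cases "f = 1")
  case False
  then have "d*a + f - 1 = (f - 1) + d*a" "f - 1 < d" using assms by auto
  then have "(d*a + f - 1) mod d = f - 1" by simp
  then show ?thesis using False assms(2) by (simp add: resid_def)
qed (simp add: resid_def)

lemma Cfun_eq_weight_sum:
  fixes x q :: complex
  assumes "q \<noteq> 0" "(x*q)^d \<noteq> 1" "resid d N = g" "g \<le> d"
    and "ma \<le> d" "ma + e = g \<or> ma + e = g + d"
    and "mb \<le> d" "mb + g = e \<or> mb + g = e + d"
  shows "Cfun d k e N x q = (\<Sum>n. Pn d k e x q n * weight d x q n ma * inverse (q^(n*N))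
    + - Pn d k e x q n * weight d x q n mb * (x*q^(n+1))^N)"
  unfolding Cfun_def assms(3) calpha_eq_weight[OF assms(1,2,5,6)] cbeta_eq_weight[OF assms(1,2,4,7,8)] ..

lemma beta_terms_difference:
  fixes x q :: complex
  assumes "q \<noteq> 0" "norm q < 1" "norm x \<le> 1" "1 \<le> d"
    and "N = Suc N'" "N + m + Nt = d*k + e + d"
  shows "- Pn d k e x q n * weight d x q n m * (x*q^(n+1))^N
      - (- Pn d k e x q n * weight d x q n (Suc m) * (x*q^(n+1))^N')
    = (x*q)^N' * (talpha d k e (x*q) q n * inverse (q^(n*Nt)))"
proof -
  let ?p = "q^n" and ?X = "x*q" and ?T = "q^(n*d)"
  let ?c = "1 - ?X^d" and ?b = "1 - ?X" and ?w = "1 - ?X^d * ?T"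
  note nz = Pn_nonzero_factors[OF assms(2-4)]
  have T: "?T = ?p^d" and T0: "?T \<noteq> 0" using assms(1) by (simp_all add: power_mult)
  have "x*q^(n+1) = ?X * ?p" by (simp add: mult_ac)
  then have "- Pn d k e x q n * weight d x q n m * (x*q^(n+1))^N
      - (- Pn d k e x q n * weight d x q n (Suc m) * (x*q^(n+1))^N')
      = Pn d k e x q n * (?X*?p)^N' * (weight d x q n (Suc m) - ?X * ?p * weight d x q n m)"
    unfolding assms(5) by (simp add: algebra_simps)
  also have "\<dots> = pref d k e x q n * (?c / (?w * ?b)) * Pn_tail d x q n * (?X*?p)^N'
      * (?p^Suc m * ?b * ?w / (?T * ?c))"
    unfolding weight_step Pn_factor[OF assms(2,4)] by (simp add: mult.assoc)
  also have "\<dots> = pref d k e x q n * Pn_tail d x q n * (?X*?p)^N' * (?p^Suc m / ?T)"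
  proof -
    have "\<And>P t Y Z C W B T :: complex. C \<noteq> 0 \<Longrightarrow> W \<noteq> 0 \<Longrightarrow> B \<noteq> 0 \<Longrightarrow>
        P * (C / (W*B)) * t * Y * (Z*B*W / (T*C)) = P * t * Y * (Z/T)"
      by (simp add: field_simps)
    then show ?thesis using nz by blast
  qed
  also have "\<dots> = pref d k e x q n * Pn_tail d x q n * ((?X*?p)^N' * (?p^Suc m / ?T))"
    by (simp only: mult.assoc)
  also have "(?X*?p)^N' * (?p^Suc m / ?T) = ?X^N' * (?p^(d*k+e) * inverse (?p^Nt))"
  proof -
    have "?p^N' * ?p^Suc m * ?p^Nt = ?p^(d*k+e) * ?T"
      unfolding T power_add[symmetric] using assms(5,6) by simp
    then show ?thesis using T0 assms(1) by (simp add: power_mult_distrib field_simps)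
  qed
  also have "pref d k e x q n * Pn_tail d x q n * (?X^N' * (?p^(d*k+e) * inverse (?p^Nt)))
      = ?X^N' * (talpha d k e (x*q) q n * inverse (q^(n*Nt)))"
    unfolding talpha_mult_q power_mult by (simp only: ac_simps)
  finally show ?thesis .
qed

lemma alpha_terms_difference:
  fixes x q :: complex
  assumes "q \<noteq> 0" "norm q < 1" "norm x \<le> 1" "1 \<le> d"
    and "N = Suc N'" "N + Nt = d*k + e + Suc m"
  shows "Pn d k e x q (Suc n) * weight d x q (Suc n) (Suc m) * inverse (q^(Suc n*N))
      - Pn d k e x q (Suc n) * weight d x q (Suc n) m * inverse (q^(Suc n*N'))
    = (x*q)^N' * (tbeta d k e (x*q) q n * (x*q*q^(n+1))^Nt)"
proof -
  let ?p = "q^n" and ?s = "q^Suc n" and ?X = "x*q" and ?S = "q^(Suc n*d)"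
  let ?c = "1 - ?X^d" and ?b = "1 - ?X" and ?v = "1 - ?S"
  let ?r = "x^(d*k+e) * q^((2*d*k+2*e+d)*(n+1))"
  note nz = Pn_nonzero_factors[OF assms(2-4)]
  have S: "?S = ?s^d" by (rule power_mult)
  have s0: "?s \<noteq> 0" "?S \<noteq> 0" using assms(1) by simp_all
  have "inverse (q^(Suc n*N')) = ?s * inverse (?s^N)"
    unfolding assms(5) power_mult using assms(1) by (simp add: field_simps)
  then have "Pn d k e x q (Suc n) * weight d x q (Suc n) (Suc m) * inverse (q^(Suc n*N))
      - Pn d k e x q (Suc n) * weight d x q (Suc n) m * inverse (q^(Suc n*N'))
      = Pn d k e x q (Suc n) * inverse (?s^N) * (weight d x q (Suc n) (Suc m) - ?s * weight d x q (Suc n) m)"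
    unfolding power_mult by (simp add: algebra_simps)
  also have "\<dots> = pref d k e x q n * (- ?r) * (?c / (?v * ?b)) * Pn_tail d x q n * inverse (?s^N)
      * (?s^Suc m * ?X^m * ?b * ?v / (?S * ?c))"
    unfolding weight_diff Pn_Suc_factor[OF assms(2-4)] by (simp add: mult.assoc)
  also have "\<dots> = pref d k e x q n * (- ?r) * Pn_tail d x q n * inverse (?s^N) * (?s^Suc m * ?X^m / ?S)"
  proof -
    have "\<And>P R t Y Z C V B T :: complex. C \<noteq> 0 \<Longrightarrow> V \<noteq> 0 \<Longrightarrow> B \<noteq> 0 \<Longrightarrow>
        P * R * (C / (V*B)) * t * Y * (Z*B*V / (T*C)) = P * R * t * Y * (Z/T)"
      by (simp add: field_simps)
    then show ?thesis using nz by (metis (no_types, lifting) mult.assoc)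
  qed
  also have "\<dots> = - (pref d k e x q n * Pn_tail d x q n * (?r * inverse (?s^N) * (?s^Suc m * ?X^m / ?S)))"
    by (simp only: ac_simps mult_minus_left mult_minus_right)
  also have "?r * inverse (?s^N) * (?s^Suc m * ?X^m / ?S) = ?X^N' * (?p^(d*k+e) * ((?X*?s)^Nt))"
  proof -
    have X: "?X^(d*k+e) * ?X^m = ?X^N' * ?X^Nt"
      unfolding power_add[symmetric] using assms(5,6) by simp
    have s:  "?s^(d*k+e+d) * ?s^Suc m = ?s^Nt * ?s^N * ?S"
      unfolding S power_add[symmetric] by (rule arg_cong[where f = "\<lambda>j. ?s^j"]) (use assms(5,6) in simp)
    have "\<And>A P B M Y U V W Sn S :: complex. Sn \<noteq> 0 \<Longrightarrow> S \<noteq> 0 \<Longrightarrow>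
        A*Y = U*V \<Longrightarrow> B*M = W*Sn*S \<Longrightarrow> A*P*B * inverse Sn * (M*Y/S) = U * (P * (V*W))"
    proof -
      fix A P B M Y U V W Sn S :: complex
      assume nz: "Sn \<noteq> 0" "S \<noteq> 0" and AY: "A*Y = U*V" and BM: "B*M = W*Sn*S"
      have "A*P*B * inverse Sn * (M*Y/S) = P * (A*Y) * (B*M) / (Sn*S)"
        by (simp add: field_simps)
      also have "\<dots> = U * (P * (V*W))" unfolding AY BM using nz by (simp add: field_simps)
      finally show "A*P*B * inverse Sn * (M*Y/S) = U * (P * (V*W))" .
    qed
    from this[OF _ s0(2) X s] show ?thesis unfolding pref_ratio_split power_mult_distrib using s0 by simp
  qed
  also have "- (pref d k e x q n * Pn_tail d x q n * (?X^N' * (?p^(d*k+e) * ((?X*?s)^Nt))))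
      = ?X^N' * (tbeta d k e (x*q) q n * (x*q*q^(n+1))^Nt)"
    unfolding tbeta_def talpha_mult_q by (simp add: mult_ac)
  finally show ?thesis .
qed

lemma Cfun_diff_eq_Tfun:
  fixes x q :: complex
  assumes analytic: "q \<noteq> 0" "norm q < 1" "norm x \<le> 1" "1 \<le> d"
    and "resid d (Suc N') = g" "g \<le> d" "Suc ma \<le> d" "Suc mb \<le> d"
    and "Suc ma + e = g \<or> Suc ma + e = g + d" "mb + g = e \<or> mb + g = e + d"
    and "resid d N' = g'" "g' \<le> d"
    and "ma + e = g' \<or> ma + e = g' + d" "Suc mb + g' = e \<or> Suc mb + g' = e + d"
    and "Suc N' + mb + Nt = d*k + e + d" "Suc N' + Nt = d*k + e + Suc ma"
  shows "Cfun d k e (Suc N') x q - Cfun d k e N' x q = (x*q)^N' * Tfun d k e Nt (x*q) q"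
proof -
  have X: "(x*q)^d \<noteq> 1" using Pn_nonzero_factors(1)[OF analytic(2-4)] by simp
  have CF: "Cfun d k e (Suc N') x q = (\<Sum>n. Pn d k e x q n * weight d x q n (Suc ma) * inverse (q^(n * Suc N'))
      + - Pn d k e x q n * weight d x q n mb * (x*q^(n+1))^Suc N')"
    using assms(5-10) by (intro Cfun_eq_weight_sum[OF assms(1) X]) auto
  have CG: "Cfun d k e N' x q = (\<Sum>n. Pn d k e x q n * weight d x q n ma * inverse (q^(n * N'))
      + - Pn d k e x q n * weight d x q n (Suc mb) * (x*q^(n+1))^N')"
    using assms(7,8,11-14) by (intro Cfun_eq_weight_sum[OF assms(1) X]) auto
  show ?thesis unfolding CF CG Tfun_def
  proof (rule suminf_diff_eq_shifted)
    fix n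
    show "- Pn d k e x q n * weight d x q n mb * (x*q^(n+1))^Suc N'
        - - Pn d k e x q n * weight d x q n (Suc mb) * (x*q^(n+1))^N'
        = (x*q)^N' * (talpha d k e (x*q) q n * inverse (q^(n*Nt)))"
      by (intro beta_terms_difference analytic assms(15) refl)
    show "Pn d k e x q (Suc n) * weight d x q (Suc n) (Suc ma) * inverse (q^(Suc n * Suc N'))
        - Pn d k e x q (Suc n) * weight d x q (Suc n) ma * inverse (q^(Suc n * N'))
        = (x*q)^N' * (tbeta d k e (x*q) q n * (x*q*q^(n+1))^Nt)"
      by (intro alpha_terms_difference analytic assms(16) refl)
  qed (rule summable_Pn_weight_div_power[OF analytic], rule summable_Pn_weight_div_power[OF analytic],
      rule summable_Pn_weight_times_power[OF analytic], rule summable_Pn_weight_times_power[OF analytic],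
      simp add: weight_0_left[OF X])
qed

theorem mainTheorem6:
  fixes a k d e f :: nat and x q :: complex
  assumes "1 \<le> a" "a \<le> k" "1 \<le> d" "d \<le> k" "1 \<le> f" "f \<le> d"
    and "e = d \<or> 2 * e = d"
    and "q \<noteq> 0" "norm q < 1" "norm x \<le> 1"
  shows "Cfun d k e (d*a+f) x q - Cfun d k e (d*a+f-1) x q =
    (if f \<le> e then (x*q)^(d*a+f-1) * Tfun d k e (d*k-d*a+d) (x*q) q
     else (x*q)^(d*a+f-1) * Tfun d k e (d*k-d*a) (x*q) q)"
proof -
  have e: "1 \<le> e" "e \<le> d" using assms(3,7) by auto
  define N' where "N' = d*a + f - 1"
  define Nt where "Nt = (if f \<le> e then d*k - d*a + d else d*k - d*a)"
  have N: "d*a + f = Suc N'" and dak: "d*a \<le> d*k" using assms(1,2,5) by (simp_all add: N'_def)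
  have "Cfun d k e (Suc N') x q - Cfun d k e N' x q = (x*q)^N' * Tfun d k e Nt (x*q) q"
  proof (rule Cfun_diff_eq_Tfun[OF assms(8-10,3), where
        ma = "if f \<le> e then d + f - e - 1 else f - e - 1" and mb = "if f \<le> e then e - f else d + e - f"])
    show "resid d (Suc N') = f" unfolding N[symmetric] by (rule resid_mult_add[OF assms(5,6)])
    show "resid d N' = (if f = 1 then d else f - 1)"
      unfolding N'_def by (rule resid_mult_add_pred[OF assms(1,5,6)])
  qed (insert dak assms(5,6) e, simp_all only: N[symmetric] Nt_def split: if_split, arith+)
  then show ?thesis unfolding N Nt_def by (cases "f \<le> e") simp_all
qed

end
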